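(* Let $t\ge 3$ be an integer and let $G=(V,E)$ be a $t$-hypergraph with $|V|=s\ge 2$ vertices and $|E|=m$ hyperedges. Let $k\in\mathbb{N}$ satisfy $2^{t+2}\log(s)\le k\le s$. If \[ m \;\ge\; 3s\left(\frac{2^{t+3}\cdot s\cdot\log(s)}{k}\right)^{t-2}, \] then there exists a subset $S\subseteq V$ with $|S|\le k$ that spans at least $|S| + \frac{k}{2^{t+1}\log(s)}$ hyperedges.
   Context: A $t$-hypergraph is a hypergraph in which every hyperedge is a set of at most $t$ distinct vertices, and parallel (repeated) hyperedges are allowed and counted with multiplicity. A set of vertices $S$ spans a hyperedge $e$ if all vertices of $e$ lie in $S$. Logarithms are base 2. *)

theory Defs
  imports Complex_Main "HOL-Library.Multiset"
begin

definition t_hypergraph :: "nat \<Rightarrow> 'a set \<Rightarrow> 'a set multiset \<Rightarrow> bool" where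
  "t_hypergraph t V E \<longleftrightarrow> finite V \<and> (\<forall>e \<in># E. e \<subseteq> V \<and> card e \<le> t)"

definition spanned :: "'a set multiset \<Rightarrow> 'a set \<Rightarrow> nat" where
  "spanned E S = size (filter_mset (\<lambda>e. e \<subseteq> S) E)"

end

theory Submission
  imports Defs
begin

text \<open>
  Delete a random set \<open>R\<close> of \<open>r \<approx> k / (2\<^sup>t\<^sup>+\<^sup>2 log s) + t - 2\<close> vertices. An edge keeps at
  most two vertices outside \<open>R\<close> with probability about \<open>(r/s)\<^sup>t\<^sup>-\<^sup>2\<close>, so for a good choice
  of \<open>R\<close> the traces \<open>e - R\<close> of at least \<open>6s\<close> edges form a multigraph on \<open>V - R\<close>.

  A multigraph with more than \<open>c n\<close> edges on \<open>n < c\<^sup>\<rho>\<close> vertices contains a subgraph of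
  minimum degree \<open>c + 1\<close>; breadth-first balls in it grow by a factor \<open>c\<close> as long as they
  span no more edges than vertices, so one of radius at most \<open>\<rho>\<close> spans two edges outside
  its BFS tree. These two edges and their tree paths to the root form a set of at most
  \<open>4\<rho> + 1\<close> vertices spanning one edge more than it has vertices. Repeating this \<open>q\<close> times,
  each time after deleting the vertices already found, yields \<open>U\<close> with
  \<open>|U| \<le> q (4\<rho> + 1)\<close> spanning \<open>|U| + q\<close> edges of the multigraph, and \<open>R \<union> U\<close> spans the
  corresponding edges of the hypergraph. With \<open>\<rho> = \<lfloor>log s\<rfloor> + 1\<close> and
  \<open>q \<approx> r + k / (2\<^sup>t\<^sup>+\<^sup>1 log s)\<close> the size budget \<open>r + q (4\<rho> + 1) \<le> k\<close> holds.
\<close>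

lemma spanned_mono: "S \<subseteq> S' \<Longrightarrow> spanned E S \<le> spanned E S'"
  unfolding spanned_def by (intro size_mset_mono filter_mset_mono_strong) auto

lemma spanned_mono_mset: "E' \<subseteq># E \<Longrightarrow> spanned E' S \<le> spanned E S"
  unfolding spanned_def by (intro size_mset_mono multiset_filter_mono)

lemma spanned_add_mset: "spanned (add_mset e E) S = spanned E S + of_bool (e \<subseteq> S)"
  unfolding spanned_def by simp

lemma spanned_union: "spanned (E + F) S = spanned E S + spanned F S"
  unfolding spanned_def by simp

lemma spanned_eq_size: "\<forall>e\<in>#E. e \<subseteq> W \<Longrightarrow> spanned E W = size E"
  unfolding spanned_def by (metis (mono_tags, lifting) filter_mset_cong0 filter_mset_True)

lemma spanned_filter_subset: "S \<subseteq> U \<Longrightarrow> spanned (filter_mset (\<lambda>e. e \<subseteq> U) E) S = spanned E S"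
  unfolding spanned_def filter_filter_mset
  by (metis (no_types, lifting) dual_order.trans filter_mset_cong0)

lemma t_hypergraph_edge:
  "t_hypergraph t W E \<Longrightarrow> e \<in># E \<Longrightarrow> finite e \<and> card e \<le> t"
  unfolding t_hypergraph_def by (auto intro: finite_subset)

definition degree :: "'a set multiset \<Rightarrow> 'a \<Rightarrow> nat" where
  "degree E v = size (filter_mset (\<lambda>e. v \<in> e) E)"

lemma degree_add_mset: "degree (add_mset e E) v = degree E v + of_bool (v \<in> e)"
  unfolding degree_def by simp

lemma card_Int_edge_le:
  assumes "finite e" "card e \<le> 2" "B \<inter> e \<noteq> {} \<Longrightarrow> e \<subseteq> B'"
  shows "card (B \<inter> e) \<le> of_bool (e \<subseteq> B) + of_bool (e \<subseteq> B')"
proof (cases "B \<inter> e = {}")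
  case False
  then have "e \<subseteq> B'" using assms(3) by blast
  show ?thesis
  proof (cases "e \<subseteq> B")
    case True
    then show ?thesis using \<open>e \<subseteq> B'\<close> assms(2) by (simp add: Int_absorb1)
  next
    case False
    then have "card (B \<inter> e) < card e" using assms(1) by (intro psubset_card_mono) auto
    then show ?thesis using assms(2) \<open>e \<subseteq> B'\<close> False by simp
  qed
qed simp

text \<open>An edge meeting \<open>B\<close> lies in \<open>B'\<close>, and it is counted twice in the degree sum
  only if it lies in \<open>B\<close>.\<close>
lemma sum_degree_le_spanned:
  assumes "finite B" and "\<forall>e\<in>#E. finite e \<and> card e \<le> 2 \<and> (e \<inter> B \<noteq> {} \<longrightarrow> e \<subseteq> B')"
  shows "(\<Sum>v\<in>B. degree E v) \<le> spanned E B + spanned E B'"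
  using assms(2)
proof (induction E)
  case empty
  show ?case by (simp add: degree_def spanned_def)
next
  case (add e E)
  have "(\<Sum>v\<in>B. degree (add_mset e E) v) = (\<Sum>v\<in>B. degree E v) + card (B \<inter> e)"
    using assms(1) by (simp add: degree_add_mset sum.distrib sum.inter_filter[symmetric] Int_def)
  moreover have "card (B \<inter> e) \<le> of_bool (e \<subseteq> B) + of_bool (e \<subseteq> B')"
    using add.prems by (intro card_Int_edge_le) auto
  ultimately show ?case using add by (simp add: spanned_add_mset)
qed

definition closed_nbh :: "'a set multiset \<Rightarrow> 'a set \<Rightarrow> 'a set" where
  "closed_nbh E B = B \<union> \<Union> {e. e \<in># E \<and> e \<inter> B \<noteq> {}}"

definition ball :: "'a set multiset \<Rightarrow> 'a \<Rightarrow> nat \<Rightarrow> 'a set" where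
  "ball E v j = (closed_nbh E ^^ j) {v}"

lemma ball_0 [simp]: "ball E v 0 = {v}"
  by (simp add: ball_def)

lemma ball_Suc: "ball E v (Suc j) = closed_nbh E (ball E v j)"
  by (simp add: ball_def)

lemma subset_closed_nbh: "B \<subseteq> closed_nbh E B"
  unfolding closed_nbh_def by auto

lemma closed_nbh_subset: "t_hypergraph t W E \<Longrightarrow> B \<subseteq> W \<Longrightarrow> closed_nbh E B \<subseteq> W"
  unfolding closed_nbh_def t_hypergraph_def by auto

lemma ball_subset: "t_hypergraph t W E \<Longrightarrow> v \<in> W \<Longrightarrow> ball E v j \<subseteq> W"
  by (induction j) (auto simp: ball_Suc intro: closed_nbh_subset[THEN subsetD])

lemma finite_ball: "t_hypergraph t W E \<Longrightarrow> v \<in> W \<Longrightarrow> finite (ball E v j)"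
  using ball_subset t_hypergraph_def finite_subset by metis

lemma card_ball_ge_power:
  assumes G: "t_hypergraph 2 W E" and v: "v \<in> W"
    and deg: "\<forall>w\<in>W. c + 1 \<le> degree E w"
    and sparse: "\<forall>i\<le>j. spanned E (ball E v i) \<le> card (ball E v i)"
  shows "c ^ j \<le> card (ball E v j)"
  using sparse
proof (induction j)
  case (Suc j)
  define B where "B = ball E v j"
  have BW: "B \<subseteq> W" using ball_subset[OF G v] B_def by auto
  have "(c + 1) * card B \<le> (\<Sum>w\<in>B. degree E w)"
    using sum_bounded_below[of B "c + 1" "degree E"] deg BW by (auto simp: mult.commute)
  also have "\<dots> \<le> spanned E B + spanned E (closed_nbh E B)"
    using t_hypergraph_edge[OF G] finite_ball[OF G v] unfolding B_def closed_nbh_def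
    by (intro sum_degree_le_spanned) auto
  also have "\<dots> \<le> card B + card (closed_nbh E B)"
    using Suc.prems B_def ball_Suc[of E v j] by (metis add_le_mono le_Suc_eq order_refl)
  finally have "c * card B \<le> card (closed_nbh E B)" by simp
  then show ?case using Suc B_def ball_Suc[of E v j]
    by (metis le_SucI mult_le_mono2 order_trans power_Suc)
qed simp

lemma closed_nbh_diff_edge:
  assumes G: "t_hypergraph 2 W E" and w: "w \<in> closed_nbh E B - B"
  shows "\<exists>u\<in>B. {w, u} \<in># E"
proof -
  obtain e where e: "e \<in># E" "w \<in> e" and "e \<inter> B \<noteq> {}" using w unfolding closed_nbh_def by auto
  then obtain u where u: "u \<in> e" "u \<in> B" by auto
  have "u \<noteq> w" using u w by auto
  then have "{w, u} \<subseteq> e" "card {w, u} = 2" using u e by auto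
  moreover have "finite e" "card e \<le> 2" using t_hypergraph_edge[OF G e(1)] by auto
  ultimately have "{w, u} = e" by (metis card_subset_eq le_antisym card_mono)
  then show ?thesis using u e by auto
qed

text \<open>\<open>S\<close> stands for the union of the tree paths, each of length at most \<open>j\<close>, from the
  vertices of \<open>X\<close> to the root \<open>v\<close>.\<close>
definition connects_to_root :: "'a set multiset \<Rightarrow> 'a \<Rightarrow> 'a set \<Rightarrow> nat \<Rightarrow> bool" where
  "connects_to_root T v B j \<longleftrightarrow> (\<forall>X \<subseteq> B. \<exists>S. X \<subseteq> S \<and> v \<in> S \<and> S \<subseteq> B \<and>
     card S \<le> 1 + card X * j \<and> card S \<le> spanned T S + 1)"

lemma connects_to_root_extend:
  assumes T: "connects_to_root T v B j" and fin: "finite B" "finite N" and disj: "B \<inter> N = {}"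
    and p: "\<forall>w\<in>N. p w \<in> B"
  shows "connects_to_root (T + mset_set ((\<lambda>w. {w, p w}) ` N)) v (B \<union> N) (Suc j)"
proof -
  define pe where "pe w = {w, p w}" for w
  have inj: "inj_on pe N"
  proof (rule inj_onI)
    fix w w' assume w: "w \<in> N" "w' \<in> N" "pe w = pe w'"
    then have "w \<in> {w', p w'}" by (auto simp: pe_def)
    moreover have "w \<noteq> p w'" using p disj w by auto
    ultimately show "w = w'" by auto
  qed
  have "connects_to_root (T + mset_set (pe ` N)) v (B \<union> N) (Suc j)"
    unfolding connects_to_root_def
  proof (intro allI impI)
    fix X assume X: "X \<subseteq> B \<union> N"
    define X1 where "X1 = X \<inter> B"
    define X2 where "X2 = X - B"
    have X2N: "X2 \<subseteq> N" using X X2_def by auto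
    have fX: "finite X1" "finite X2"
      using finite_subset[OF _ fin(1)] finite_subset[OF X2N fin(2)] X1_def by auto
    have "X = X1 \<union> X2" "X1 \<inter> X2 = {}" by (auto simp: X1_def X2_def)
    then have cX: "card X = card X1 + card X2" using fX by (simp add: card_Un_disjoint)
    have "X1 \<union> p ` X2 \<subseteq> B" using X1_def p X2N by auto
    from T[unfolded connects_to_root_def, rule_format, OF this] obtain S' where S':
      "X1 \<union> p ` X2 \<subseteq> S'" "v \<in> S'" "S' \<subseteq> B"
      "card S' \<le> 1 + card (X1 \<union> p ` X2) * j" "card S' \<le> spanned T S' + 1"
      by blast
    have "card (X1 \<union> p ` X2) \<le> card X"
      using cX card_Un_le[of X1 "p ` X2"] card_image_le[OF fX(2), of p] by linarith
    then have "card (X1 \<union> p ` X2) * j \<le> card X * j" by (rule mult_le_mono1)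
    then have cS': "card S' \<le> 1 + card X * j" using S'(4) by linarith
    define S where "S = S' \<union> X2"
    have "finite S'" "S' \<inter> X2 = {}" using finite_subset[OF S'(3) fin(1)] S'(3) X2_def by auto
    then have cS: "card S = card S' + card X2" using fX(2) S_def by (simp add: card_Un_disjoint)
    have "pe ` X2 \<subseteq> {e \<in> pe ` N. e \<subseteq> S}" using X2N S' S_def pe_def by auto
    then have "card (pe ` X2) \<le> card {e \<in> pe ` N. e \<subseteq> S}" using fin(2) by (intro card_mono) auto
    moreover have "card (pe ` X2) = card X2" using inj X2N by (metis card_image inj_on_subset)
    ultimately have "card X2 \<le> spanned (mset_set (pe ` N)) S"
      unfolding spanned_def using fin(2) by simp
    moreover have "spanned T S' \<le> spanned T S" unfolding S_def by (intro spanned_mono) auto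
    ultimately have "card S \<le> spanned (T + mset_set (pe ` N)) S + 1"
      using cS S'(5) by (simp add: spanned_union)
    moreover have "card S \<le> 1 + card X * Suc j" using cS cX cS' by simp
    moreover have "X \<subseteq> S" "S \<subseteq> B \<union> N" using S' X1_def X2_def S_def X2N by auto
    ultimately show "\<exists>S. X \<subseteq> S \<and> v \<in> S \<and> S \<subseteq> B \<union> N \<and> card S \<le> 1 + card X * Suc j
        \<and> card S \<le> spanned (T + mset_set (pe ` N)) S + 1"
      using S'(2) S_def by blast
  qed
  then show ?thesis by (simp add: pe_def[abs_def])
qed

definition bfs_tree :: "'a set multiset \<Rightarrow> 'a \<Rightarrow> nat \<Rightarrow> 'a set multiset \<Rightarrow> bool" where
  "bfs_tree E v j T \<longleftrightarrow> T \<subseteq># filter_mset (\<lambda>e. e \<subseteq> ball E v j) E \<and>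
     size T + 1 = card (ball E v j) \<and> connects_to_root T v (ball E v j) j"

lemma ex_bfs_tree:
  assumes G: "t_hypergraph 2 W E" and v: "v \<in> W"
  shows "\<exists>T. bfs_tree E v j T"
proof (induction j)
  case 0
  have "connects_to_root {#} v {v} 0"
    unfolding connects_to_root_def by (intro allI impI exI[of _ "{v}"]) auto
  then show ?case unfolding bfs_tree_def by (intro exI[of _ "{#}"]) auto
next
  case (Suc j)
  define B where "B = ball E v j"
  define N where "N = closed_nbh E B - B"
  have B': "ball E v (Suc j) = B \<union> N"
    using subset_closed_nbh[of B E] by (auto simp: B_def N_def ball_Suc)
  from Suc obtain T where T: "T \<subseteq># filter_mset (\<lambda>e. e \<subseteq> B) E" "size T + 1 = card B"
    "connects_to_root T v B j" unfolding B_def bfs_tree_def by blast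
  have "finite (closed_nbh E B)"
    using closed_nbh_subset[OF G ball_subset[OF G v]] G unfolding B_def t_hypergraph_def
    by (blast intro: finite_subset)
  then have fin: "finite B" "finite N" "B \<inter> N = {}" using subset_closed_nbh[of B E] N_def
    by (auto intro: finite_subset)
  have "\<forall>w\<in>N. \<exists>u. u \<in> B \<and> {w, u} \<in># E" using closed_nbh_diff_edge[OF G] unfolding N_def by blast
  then obtain p where p: "\<forall>w\<in>N. p w \<in> B \<and> {w, p w} \<in># E" by metis
  define T' where "T' = T + mset_set ((\<lambda>w. {w, p w}) ` N)"
  have inj: "inj_on (\<lambda>w. {w, p w}) N"
  proof (rule inj_onI)
    fix w w' assume w: "w \<in> N" "w' \<in> N" "{w, p w} = {w', p w'}"
    then have "w \<in> {w', p w'}" by auto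
    moreover have "w \<noteq> p w'" using p fin(3) w by auto
    ultimately show "w = w'" by auto
  qed
  have "filter_mset (\<lambda>e. e \<subseteq> B \<union> N) E
      = filter_mset (\<lambda>e. e \<subseteq> B) E + filter_mset (\<lambda>e. e \<subseteq> B \<union> N \<and> \<not> e \<subseteq> B) E"
    by (induction E) auto
  moreover have "mset_set ((\<lambda>w. {w, p w}) ` N) \<subseteq># filter_mset (\<lambda>e. e \<subseteq> B \<union> N \<and> \<not> e \<subseteq> B) E"
    using p fin by (intro subset_mset.order_trans[OF subset_imp_msubset_mset_set
        mset_set_set_mset_msubset]) auto
  ultimately have "T' \<subseteq># filter_mset (\<lambda>e. e \<subseteq> B \<union> N) E"
    using T(1) unfolding T'_def by (simp add: subset_mset.add_mono)
  moreover have "size T' + 1 = card (B \<union> N)"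
    using T(2) fin card_image[OF inj] unfolding T'_def by (simp add: card_Un_disjoint)
  moreover have "connects_to_root T' v (B \<union> N) (Suc j)"
    unfolding T'_def using T(3) fin p by (intro connects_to_root_extend) auto
  ultimately show ?case unfolding bfs_tree_def B' by blast
qed

lemma exists_min_degree_subset:
  assumes fin: "finite W" and edges: "\<forall>e\<in>#E. e \<subseteq> W" and many: "c * card W + 1 \<le> size E"
  shows "\<exists>U\<subseteq>W. c * card U + 1 \<le> spanned E U \<and>
           (\<forall>w\<in>U. c + 1 \<le> degree (filter_mset (\<lambda>e. e \<subseteq> U) E) w)"
proof -
  define P where "P U \<longleftrightarrow> U \<subseteq> W \<and> c * card U + 1 \<le> spanned E U" for U
  have "P W" using many spanned_eq_size[OF edges] unfolding P_def by simp
  then obtain U where PU: "P U" and min: "\<And>U'. P U' \<Longrightarrow> card U \<le> card U'"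
    using ex_has_least_nat[of P W card] by blast
  have fU: "finite U" using PU fin finite_subset unfolding P_def by blast
  have "c + 1 \<le> degree (filter_mset (\<lambda>e. e \<subseteq> U) E) w" if w: "w \<in> U" for w
  proof -
    have "\<not> P (U - {w})" using min[of "U - {w}"] w fU card_Diff1_less by fastforce
    then have "spanned E (U - {w}) \<le> c * (card U - 1)" using PU w fU unfolding P_def by auto
    moreover have "spanned E U = degree (filter_mset (\<lambda>e. e \<subseteq> U) E) w + spanned E (U - {w})"
      unfolding spanned_def degree_def by (induction E) auto
    moreover have "c * card U = c * (card U - 1) + c" using w fU by (cases "card U") auto
    ultimately show ?thesis using PU unfolding P_def by linarith
  qed
  then show ?thesis using PU unfolding P_def by blast
qed

lemma exists_dense_ball:
  assumes G: "t_hypergraph 2 W E" and v: "v \<in> W"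
    and deg: "\<forall>w\<in>W. c + 1 \<le> degree E w" and small: "card W < c ^ R"
  shows "\<exists>i\<le>R. card (ball E v i) + 1 \<le> spanned E (ball E v i)"
proof (rule ccontr)
  assume "\<not> ?thesis"
  then have "\<forall>i\<le>R. spanned E (ball E v i) \<le> card (ball E v i)"
    using not_less_eq_eq by auto
  then have "c ^ R \<le> card (ball E v R)" by (rule card_ball_ge_power[OF G v deg])
  moreover have "finite W" using G unfolding t_hypergraph_def by blast
  then have "card (ball E v R) \<le> card W" using ball_subset[OF G v] by (rule card_mono)
  ultimately show False using small by linarith
qed

lemma ex_two_elements_subset_mset:
  assumes "2 \<le> size M"
  obtains x y where "{#x, y#} \<subseteq># M"
proof -
  obtain x where x: "x \<in># M"
    using assms by (metis multiset_nonemptyE not_numeral_le_zero size_empty)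
  then have "1 \<le> size (M - {#x#})" using assms by (simp add: size_Diff_singleton)
  then obtain y where "y \<in># M - {#x#}" by (metis multiset_nonemptyE not_one_le_zero size_empty)
  then show ?thesis using x that by (simp add: insert_subset_eq_iff)
qed

text \<open>Two edges outside a BFS tree, joined to the root by tree paths, give a set that spans
  one edge more than it has vertices.\<close>
lemma small_subset_of_dense_ball:
  assumes G: "t_hypergraph 2 W E" and v: "v \<in> W"
    and dense: "card (ball E v i) + 1 \<le> spanned E (ball E v i)"
  shows "\<exists>S \<subseteq> ball E v i. card S \<le> 4 * i + 1 \<and> card S + 1 \<le> spanned E S"
proof -
  define B where "B = ball E v i"
  define F where "F = filter_mset (\<lambda>e. e \<subseteq> B) E"
  obtain T where "bfs_tree E v i T" using ex_bfs_tree[OF G v] by blast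
  then have T: "T \<subseteq># F" "size T + 1 = card B" "connects_to_root T v B i"
    unfolding bfs_tree_def B_def F_def by simp_all
  have "2 \<le> size (F - T)"
    using dense T(1,2) size_Diff_submset[of T F] unfolding B_def F_def spanned_def by linarith
  then obtain e1 e2 where "{#e1, e2#} \<subseteq># F - T" by (rule ex_two_elements_subset_mset)
  then have "T + {#e1, e2#} \<subseteq># T + (F - T)" by (rule subset_mset.add_left_mono)
  also have "\<dots> = F" using T(1) by (rule subset_mset.add_diff_inverse)
  finally have TF: "T + {#e1, e2#} \<subseteq># F" .
  then have "e1 \<in># F" "e2 \<in># F" using mset_subset_eqD[OF TF] by simp_all
  then have e12: "e1 \<union> e2 \<subseteq> B" "card e1 \<le> 2" "card e2 \<le> 2" "finite e1" "finite e2"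
    using t_hypergraph_edge[OF G] unfolding F_def by auto
  then have "card (e1 \<union> e2) \<le> 4" using card_Un_le[of e1 e2] by linarith
  then have small: "card (e1 \<union> e2) * i \<le> 4 * i" by (rule mult_le_mono1)
  from T(3)[unfolded connects_to_root_def, rule_format, OF e12(1)] obtain S where
    S: "e1 \<union> e2 \<subseteq> S" "S \<subseteq> B" "card S \<le> 1 + card (e1 \<union> e2) * i" "card S \<le> spanned T S + 1"
    by blast
  have "spanned {#e1, e2#} S = 2" using S(1) by (simp add: spanned_def)
  then have "spanned (T + {#e1, e2#}) S = spanned T S + 2" by (simp only: spanned_union)
  moreover have "T + {#e1, e2#} \<subseteq># E"
    using TF unfolding F_def by (meson multiset_filter_subset subset_mset.order_trans)
  ultimately have "spanned T S + 2 \<le> spanned E S" using spanned_mono_mset by metis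
  then have "card S + 1 \<le> spanned E S" using S(4) by linarith
  moreover have "card S \<le> 4 * i + 1" using S(3) small by linarith
  ultimately show ?thesis using S(2) unfolding B_def by blast
qed

lemma small_subset_with_excess:
  assumes G: "t_hypergraph 2 W E" and small: "card W < c ^ R" and many: "c * card W + 1 \<le> size E"
  shows "\<exists>S\<subseteq>W. card S \<le> 4 * R + 1 \<and> card S + 1 \<le> spanned E S"
proof -
  have fin: "finite W" and edges: "\<forall>e\<in>#E. e \<subseteq> W" using G unfolding t_hypergraph_def by auto
  obtain U where U: "U \<subseteq> W" "c * card U + 1 \<le> spanned E U"
    and deg: "\<forall>w\<in>U. c + 1 \<le> degree (filter_mset (\<lambda>e. e \<subseteq> U) E) w"
    using exists_min_degree_subset[OF fin edges many] by blast
  show ?thesis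
  proof (cases "U = {}")
    case True
    then show ?thesis using U by (intro exI[of _ "{}"]) auto
  next
    case False
    then obtain v where v: "v \<in> U" by blast
    define EU where "EU = filter_mset (\<lambda>e. e \<subseteq> U) E"
    have fU: "finite U" using U(1) fin by (rule finite_subset)
    have GU: "t_hypergraph 2 U EU" using G fU unfolding t_hypergraph_def EU_def by auto
    have "card U < c ^ R" using card_mono[OF fin U(1)] small by linarith
    then obtain i where "i \<le> R" and "card (ball EU v i) + 1 \<le> spanned EU (ball EU v i)"
      using exists_dense_ball[OF GU v] deg unfolding EU_def by blast
    then obtain S where S: "S \<subseteq> ball EU v i" "card S \<le> 4 * i + 1" "card S + 1 \<le> spanned EU S"
      using small_subset_of_dense_ball[OF GU v] by blast
    have "S \<subseteq> U" using S(1) ball_subset[OF GU v] by blast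
    then have "spanned EU S = spanned E S" unfolding EU_def by (rule spanned_filter_subset)
    then show ?thesis using S \<open>S \<subseteq> U\<close> U(1) \<open>i \<le> R\<close> by (intro exI[of _ S]) auto
  qed
qed

definition drop_vertices :: "'a set multiset \<Rightarrow> 'a set \<Rightarrow> 'a set multiset" where
  "drop_vertices E U = image_mset (\<lambda>e. e - U) (filter_mset (\<lambda>e. \<not> e \<subseteq> U) E)"

lemma t_hypergraph_drop_vertices:
  assumes "t_hypergraph t W E"
  shows "t_hypergraph t (W - U) (drop_vertices E U)"
proof -
  have "card (e - U) \<le> t" if "e \<in># E" for e
    using t_hypergraph_edge[OF assms that] card_mono[of e "e - U"] by auto
  then show ?thesis using assms unfolding t_hypergraph_def drop_vertices_def by auto
qed

lemma size_drop_vertices: "size (drop_vertices E U) + spanned E U = size E"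
  unfolding drop_vertices_def spanned_def using multiset_partition[of E "\<lambda>e. e \<subseteq> U"]
  by (metis add.commute size_image_mset size_union)

lemma spanned_Un_drop_vertices: "spanned E (U \<union> B) = spanned E U + spanned (drop_vertices E U) B"
  unfolding spanned_def drop_vertices_def filter_mset_image_mset size_image_mset
  by (induction E) auto

text \<open>Greedy: each round applies \<open>small_subset_with_excess\<close> after deleting the vertices
  chosen so far.\<close>
lemma exists_subset_with_excess:
  assumes G: "t_hypergraph 2 W E" and small: "card W < 2 ^ R"
    and many: "2 * card W + q * (4 * R + 2) + 1 \<le> size E"
  shows "\<exists>U\<subseteq>W. card U \<le> q * (4 * R + 1) \<and> card U + q \<le> spanned E U"
proof -
  have fin: "finite W" using G unfolding t_hypergraph_def by blast
  have "\<exists>U\<subseteq>W. card U \<le> j * (4 * R + 1) \<and> card U + j \<le> spanned E U" if "j \<le> q" for j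
    using that
  proof (induction j)
    case 0
    show ?case by (intro exI[of _ "{}"]) auto
  next
    case (Suc j)
    then obtain U where U: "U \<subseteq> W" "card U \<le> j * (4 * R + 1)" "card U + j \<le> spanned E U"
      by auto
    show ?case
    proof (cases "card U + Suc j \<le> spanned E U")
      case True
      have "card U \<le> Suc j * (4 * R + 1)" using U(2) by simp
      then show ?thesis using U(1) True by blast
    next
      case False
      have cWU: "card (W - U) \<le> card W" using fin by (simp add: card_mono)
      have "j * (4 * R + 1) + j \<le> q * (4 * R + 2)"
        using Suc.prems mult_le_mono1[of j q "4 * R + 2"] by (simp add: algebra_simps)
      then have many': "2 * card (W - U) + 1 \<le> size (drop_vertices E U)"
        using size_drop_vertices[of E U] False U(2,3) cWU many by linarith
      have small': "card (W - U) < 2 ^ R" using cWU small by linarith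
      obtain B where B: "B \<subseteq> W - U" "card B \<le> 4 * R + 1"
          "card B + 1 \<le> spanned (drop_vertices E U) B"
        using small_subset_with_excess[OF t_hypergraph_drop_vertices[OF G] small' many'] by blast
      have "finite U" "finite B" using U(1) B(1) fin finite_subset by blast+
      moreover have "U \<inter> B = {}" using B(1) by blast
      ultimately have "card (U \<union> B) = card U + card B" by (rule card_Un_disjoint)
      moreover have "card U + card B + Suc j \<le> spanned E (U \<union> B)"
        using U(3) B(3) spanned_Un_drop_vertices[of E U B] by linarith
      ultimately show ?thesis using U(1,2) B(1,2)
        by (intro exI[of _ "U \<union> B"]) (auto simp: algebra_simps)
    qed
  qed
  then show ?thesis by blast
qed

lemma binomial_le_binomial_add: "n choose k \<le> (n + j) choose (k + j)"
proof (induction j)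
  case (Suc j)
  then show ?case by (simp add: add.commute[of _ "Suc j"] le_add1 trans_le_add1)
qed simp

lemma binomial_ratio_bound:
  assumes "a \<le> r" "r \<le> s" "0 < s"
  shows "real (s choose r) * (real (r - a + 1) / real s) ^ a \<le> real ((s - a) choose (r - a))"
  using assms(1)
proof (induction a)
  case (Suc a)
  have IH: "real (s choose r) * (real (r - a + 1) / real s) ^ a \<le> real ((s - a) choose (r - a))"
    using Suc.IH Suc.prems by simp
  have ra: "0 < r - a" and sa: "0 < s - a" using Suc.prems assms(2) by auto
  have "(r - a) * ((s - a) choose (r - a)) = (s - a) * ((s - Suc a) choose (r - Suc a))"
    using times_binomial_minus1_eq[OF ra, of "s - a"] by simp
  then have "real (r - a) * real ((s - a) choose (r - a))
      = real (s - a) * real ((s - Suc a) choose (r - Suc a))"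
    by (metis of_nat_mult)
  then have step: "real ((s - a) choose (r - a)) * real (r - a) / real (s - a)
      = real ((s - Suc a) choose (r - Suc a))"
    using sa by (simp add: field_simps)
  have "real (r - Suc a + 1) = real (r - a)" using ra by simp
  then have "real (s choose r) * (real (r - Suc a + 1) / real s) ^ Suc a
      = real (s choose r) * (real (r - a) / real s) ^ a * (real (r - a) / real s)"
    by (simp add: mult.assoc mult.commute)
  also have "\<dots> \<le> real (s choose r) * (real (r - a + 1) / real s) ^ a * (real (r - a) / real s)"
    by (intro mult_right_mono mult_left_mono power_mono divide_right_mono) auto
  also have "\<dots> \<le> real ((s - a) choose (r - a)) * (real (r - a) / real s)"
    using IH by (rule mult_right_mono) simp
  also have "\<dots> \<le> real ((s - a) choose (r - a)) * real (r - a) / real (s - a)"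
    using sa assms(3) by (simp add: divide_left_mono)
  finally show ?case using step by simp
qed simp

lemma card_supersets_ge:
  assumes fV: "finite V" and AV: "A \<subseteq> V" and Ar: "card A \<le> r"
  shows "(card V - card A) choose (r - card A) \<le> card {R. R \<subseteq> V \<and> card R = r \<and> A \<subseteq> R}"
proof -
  have fA: "finite A" using AV fV by (rule finite_subset)
  let ?B = "{B. B \<subseteq> V - A \<and> card B = r - card A}"
  have "(card V - card A) choose (r - card A) = card ?B"
    using n_subsets[of "V - A" "r - card A"] fV AV by (simp add: card_Diff_subset fA)
  also have "\<dots> = card ((\<lambda>B. B \<union> A) ` ?B)"
  proof (rule card_image[symmetric], rule inj_onI)
    fix B B' assume "B \<in> ?B" "B' \<in> ?B" "B \<union> A = B' \<union> A"
    then have "B = (B \<union> A) - A" "B' = (B' \<union> A) - A" by auto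
    then show "B = B'" using \<open>B \<union> A = B' \<union> A\<close> by metis
  qed
  also have "\<dots> \<le> card {R. R \<subseteq> V \<and> card R = r \<and> A \<subseteq> R}"
  proof (rule card_mono)
    show "finite {R. R \<subseteq> V \<and> card R = r \<and> A \<subseteq> R}" using fV by simp
    show "(\<lambda>B. B \<union> A) ` ?B \<subseteq> {R. R \<subseteq> V \<and> card R = r \<and> A \<subseteq> R}"
    proof
      fix R assume "R \<in> (\<lambda>B. B \<union> A) ` ?B"
      then obtain B where B: "B \<subseteq> V - A" "card B = r - card A" "R = B \<union> A" by auto
      have "finite B" "B \<inter> A = {}" using B(1) fV finite_subset by blast+
      then have "card R = card B + card A" using B(3) fA by (simp add: card_Un_disjoint)
      then show "R \<in> {R. R \<subseteq> V \<and> card R = r \<and> A \<subseteq> R}" using B AV Ar by auto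
    qed
  qed
  finally show ?thesis .
qed

text \<open>An \<open>r\<close>-set leaves at most two vertices of \<open>e\<close> uncovered as soon as it contains a fixed
  \<open>(card e - 2)\<close>-subset of \<open>e\<close>.\<close>
lemma card_subsets_small_trace_ge:
  assumes fV: "finite V" and eV: "e \<subseteq> V" "card e \<le> a + 2" and ar: "a \<le> r" "r \<le> card V"
  shows "(card V - a) choose (r - a) \<le> card {R. R \<subseteq> V \<and> card R = r \<and> card (e - R) \<le> 2}"
proof -
  have fe: "finite e" using eV(1) fV by (rule finite_subset)
  obtain A where A: "A \<subseteq> e" "card A = card e - 2"
    using obtain_subset_with_card_n[of "card e - 2" e] by auto
  have cA: "card A \<le> a" using A eV by linarith
  have "card V - card A = (card V - a) + (a - card A)" "r - card A = (r - a) + (a - card A)"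
    using cA ar by auto
  then have "(card V - a) choose (r - a) \<le> (card V - card A) choose (r - card A)"
    by (metis binomial_le_binomial_add)
  also have "\<dots> \<le> card {R. R \<subseteq> V \<and> card R = r \<and> A \<subseteq> R}"
    using card_supersets_ge[OF fV _] A eV cA ar by (meson dual_order.trans)
  also have "\<dots> \<le> card {R. R \<subseteq> V \<and> card R = r \<and> card (e - R) \<le> 2}"
  proof (rule card_mono)
    show "finite {R. R \<subseteq> V \<and> card R = r \<and> card (e - R) \<le> 2}" using fV by simp
    have "card (e - R) \<le> 2" if "A \<subseteq> R" for R
    proof -
      have "card (e - R) \<le> card (e - A)" using that fe by (intro card_mono) auto
      also have "\<dots> = card e - card A" using A(1) fe by (simp add: card_Diff_subset finite_subset)
      finally show ?thesis using A(2) by linarith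
    qed
    then show "{R. R \<subseteq> V \<and> card R = r \<and> A \<subseteq> R} \<subseteq> {R. R \<subseteq> V \<and> card R = r \<and> card (e - R) \<le> 2}"
      by blast
  qed
  finally show ?thesis .
qed

lemma sum_small_traces_ge:
  assumes fV: "finite V" and eV: "\<forall>e\<in>#E. e \<subseteq> V \<and> card e \<le> a + 2" and ar: "a \<le> r" "r \<le> card V"
  shows "size E * ((card V - a) choose (r - a))
    \<le> (\<Sum>R | R \<subseteq> V \<and> card R = r. size (filter_mset (\<lambda>e. card (e - R) \<le> 2) E))"
  using eV
proof (induction E)
  case (add e E)
  let ?RR = "{R. R \<subseteq> V \<and> card R = r}"
  have fin: "finite ?RR" using fV by simp
  have "(\<Sum>R\<in>?RR. size (filter_mset (\<lambda>e. card (e - R) \<le> 2) (add_mset e E)))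
      = (\<Sum>R\<in>?RR. size (filter_mset (\<lambda>e. card (e - R) \<le> 2) E) + (if card (e - R) \<le> 2 then 1 else 0))"
    by (rule sum.cong) auto
  also have "\<dots> = (\<Sum>R\<in>?RR. size (filter_mset (\<lambda>e. card (e - R) \<le> 2) E))
      + card {R \<in> ?RR. card (e - R) \<le> 2}"
    using fin by (simp add: sum.distrib sum.inter_filter[symmetric])
  finally have split: "(\<Sum>R\<in>?RR. size (filter_mset (\<lambda>e. card (e - R) \<le> 2) (add_mset e E)))
      = (\<Sum>R\<in>?RR. size (filter_mset (\<lambda>e. card (e - R) \<le> 2) E))
      + card {R \<in> ?RR. card (e - R) \<le> 2}" .
  moreover have "(card V - a) choose (r - a) \<le> card {R \<in> ?RR. card (e - R) \<le> 2}"
    using card_subsets_small_trace_ge[OF fV _ _ ar] add.prems by (simp add: conj_assoc)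
  ultimately show ?case using add split by simp
qed simp

lemma ex_ge_average:
  fixes f :: "'a \<Rightarrow> real" and x :: real
  assumes "finite A" "A \<noteq> {}" "x * card A \<le> sum f A"
  shows "\<exists>a\<in>A. x \<le> f a"
proof (rule ccontr)
  assume "\<not> ?thesis"
  then have "sum f A < of_nat (card A) * x"
    using assms(1,2) by (intro sum_bounded_above_strict) (auto simp: card_gt_0_iff)
  then show False using assms(3) by (simp add: mult.commute)
qed

text \<open>Averaging over all \<open>r\<close>-subsets \<open>R\<close>: this is the random restriction of the hypergraph.\<close>
lemma exists_subset_many_small_traces:
  assumes fV: "finite V" and eV: "\<forall>e\<in>#E. e \<subseteq> V \<and> card e \<le> a + 2" and ar: "a \<le> r" "r \<le> card V"
    and V: "V \<noteq> {}"
  shows "\<exists>R\<subseteq>V. card R = r \<and> real (size E) * (real (r - a + 1) / real (card V)) ^ a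
           \<le> real (size (filter_mset (\<lambda>e. card (e - R) \<le> 2) E))"
proof -
  let ?RR = "{R. R \<subseteq> V \<and> card R = r}"
  let ?x = "real (size E) * real ((card V - a) choose (r - a)) / real (card ?RR)"
  have cRR: "card ?RR = card V choose r" using n_subsets[OF fV] by simp
  then have pos: "0 < card ?RR" using ar by simp
  then have ne: "?RR \<noteq> {}" by (metis card.empty less_irrefl)
  have fin: "finite ?RR" using fV by simp
  have "?x * card ?RR = real (size E * ((card V - a) choose (r - a)))"
    using pos by simp
  then have "?x * card ?RR \<le> (\<Sum>R\<in>?RR. real (size (filter_mset (\<lambda>e. card (e - R) \<le> 2) E)))"
    using sum_small_traces_ge[OF fV eV ar] by (simp only: of_nat_le_iff flip: of_nat_sum)
  from ex_ge_average[OF fin ne this] obtain R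
    where R: "R \<in> ?RR" "?x \<le> real (size (filter_mset (\<lambda>e. card (e - R) \<le> 2) E))"
    by blast
  have "(real (r - a + 1) / real (card V)) ^ a
      \<le> real ((card V - a) choose (r - a)) / real (card ?RR)"
    using binomial_ratio_bound[OF ar] V fV pos cRR by (simp add: field_simps card_gt_0_iff)
  then have "real (size E) * (real (r - a + 1) / real (card V)) ^ a
      \<le> real (size E) * (real ((card V - a) choose (r - a)) / real (card ?RR))"
    by (rule mult_left_mono) simp
  then have "real (size E) * (real (r - a + 1) / real (card V)) ^ a \<le> ?x" by simp
  then show ?thesis using R by auto
qed

lemma exists_superset_with_excess:
  assumes G: "t_hypergraph t V E" and R: "R \<subseteq> V" and small: "card V < 2 ^ \<rho>"
    and many: "2 * card V + q * (4 * \<rho> + 2) + 1 \<le> size (filter_mset (\<lambda>e. card (e - R) \<le> 2) E)"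
  shows "\<exists>S. R \<subseteq> S \<and> S \<subseteq> V \<and> card S \<le> card R + q * (4 * \<rho> + 1) \<and> card S + q \<le> spanned E S + card R"
proof -
  define F where "F = image_mset (\<lambda>e. e - R) (filter_mset (\<lambda>e. card (e - R) \<le> 2) E)"
  have fV: "finite V" using G unfolding t_hypergraph_def by blast
  have GF: "t_hypergraph 2 (V - R) F" using G unfolding t_hypergraph_def F_def by auto
  have "card (V - R) \<le> card V" using fV by (simp add: card_mono)
  then obtain U where U: "U \<subseteq> V - R" "card U \<le> q * (4 * \<rho> + 1)" "card U + q \<le> spanned F U"
    using exists_subset_with_excess[OF GF, of \<rho> q] small many unfolding F_def by fastforce
  have "spanned F U \<le> spanned E (R \<union> U)"
    unfolding F_def spanned_def filter_mset_image_mset size_image_mset filter_filter_mset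
    by (intro size_mset_mono filter_mset_mono_strong) auto
  moreover have "card (R \<union> U) = card R + card U"
    using U(1) finite_subset[OF R fV] finite_subset[OF _ fV, of U] by (intro card_Un_disjoint) auto
  ultimately show ?thesis using U R by (intro exI[of _ "R \<union> U"]) auto
qed

lemma log2_ge_5: "32 \<le> s \<Longrightarrow> 5 \<le> log 2 (real s)"
  by (subst le_log_iff) (auto simp: powr_numeral)

lemma less_power_floor_log2: "1 \<le> s \<Longrightarrow> real s < 2 ^ (nat \<lfloor>log 2 (real s)\<rfloor> + 1)"
proof -
  assume s: "1 \<le> s"
  then have "real s = 2 powr (log 2 (real s))" by simp
  also have "\<dots> < 2 powr (real (nat \<lfloor>log 2 (real s)\<rfloor> + 1))"
    using s by (intro powr_less_mono) linarith+
  also have "\<dots> = 2 ^ (nat \<lfloor>log 2 (real s)\<rfloor> + 1)" by (rule powr_realpow) simp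
  finally show ?thesis .
qed

lemma linear_le_power2: "3 \<le> t \<Longrightarrow> 384 * (t - 2) \<le> 44 * 2 ^ (t + 1::nat)"
proof -
  assume "3 \<le> t"
  then obtain n where n: "t = n + 3" by (metis add.commute le_add_diff_inverse)
  have "n + 1 \<le> (2::nat) ^ n" using less_exp[of n] by (simp add: Suc_le_eq)
  then have "384 * (n + 1) \<le> 384 * (2::nat) ^ n" by (rule mult_le_mono2)
  then have "384 * (n + 1) \<le> 704 * (2::nat) ^ n" by linarith
  then show ?thesis using n by (simp add: power_add)
qed

lemma parameter_budget:
  fixes P L k r q b d a :: real
  assumes P: "16 \<le> P" and L: "5 \<le> L" and k: "2 * P * L \<le> k" and r: "r \<le> k / (2 * P * L) + a"
    and q: "q \<le> r + d + 1" and d: "d = k / (P * L)" and b: "b \<le> 4 * L + 5"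
    and nn: "0 \<le> r" "0 \<le> q" "0 \<le> b" "0 \<le> a" and a: "384 * a \<le> 44 * P"
  shows "r + q * b \<le> k"
proof -
  have pos: "0 < L" "0 < P" using P L by linarith+
  then have "0 \<le> 2 * P * L" by simp
  then have k0: "0 \<le> k" using k by linarith
  have kk: "P * L \<le> k / 2" using k by simp
  have h1: "q * b \<le> (r + d + 1) * (5 * L)"
    using q b L nn by (intro mult_mono) auto
  have "5 * L * d = 5 * k / P" using d pos by (simp add: field_simps)
  also have "\<dots> \<le> 5 * k / 16" using P pos k0 by (intro divide_left_mono) auto
  finally have h2: "5 * L * d \<le> 5 * k / 16" .
  have "L \<le> k / (2 * P)" using kk pos by (simp add: field_simps)
  also have "\<dots> \<le> k / 32" using P pos k0 by (intro divide_left_mono) auto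
  finally have h3: "5 * L \<le> 5 * k / 32" by simp
  have "1 * r \<le> L * r" using nn L by (intro mult_right_mono) auto
  then have h4: "r * (1 + 5 * L) \<le> 6 * L * r" by (simp add: algebra_simps)
  have "6 * L * r \<le> 6 * L * (k / (2 * P * L) + a)" using r L by (intro mult_left_mono) auto
  also have "\<dots> = 3 * k / P + 6 * L * a" using pos by (simp add: field_simps)
  also have "3 * k / P \<le> 3 * k / 16" using P pos k0 by (intro divide_left_mono) auto
  then have "3 * k / P + 6 * L * a \<le> 3 * k / 16 + 6 * L * a" by simp
  finally have h5: "6 * L * r \<le> 3 * k / 16 + 6 * L * a" .
  have "6 * L * a \<le> 6 * L * (44 * P / 384)" using a L by (intro mult_left_mono) auto
  also have "\<dots> = (11 / 16) * (P * L)" by simp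
  also have "\<dots> \<le> (11 / 16) * (k / 2)" using kk by (intro mult_left_mono) auto
  finally have h6: "6 * L * a \<le> 11 * k / 32" by simp
  have "r + q * b \<le> r + (r + d + 1) * (5 * L)" using h1 by simp
  also have "\<dots> = r * (1 + 5 * L) + 5 * L * d + 5 * L" by (simp add: algebra_simps)
  finally show ?thesis using h2 h3 h4 h5 h6 by linarith
qed

lemma parameters_exist:
  fixes t s k :: nat
  assumes t: "3 \<le> t" and s: "2 \<le> s"
    and k: "2 ^ (t + 2) * log 2 (real s) \<le> real k" "k \<le> s"
  shows "\<exists>r q \<rho>. t - 2 \<le> r \<and> s < 2 ^ \<rho> \<and>
    2 \<le> 2 ^ (t + 3) * real s * log 2 (real s) / real k * (real (r - (t - 2) + 1) / real s) \<and>
    real r + real k / (2 ^ (t + 1) * log 2 (real s)) \<le> real q \<and> r + q * (4 * \<rho> + 1) \<le> k"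
proof -
  define L where "L = log 2 (real s)"
  define P where "P = (2::real) ^ (t + 1)"
  define a where "a = t - 2"
  have "(2::real) ^ 4 \<le> 2 ^ (t + 1)" using t by (intro power_increasing) auto
  then have P16: "16 \<le> P" by (simp add: P_def)
  have P2: "(2::real) ^ (t + 2) = 2 * P" "(2::real) ^ (t + 3) = 4 * P"
    by (simp_all add: P_def power_add)
  have L1: "1 \<le> L" using s by (simp add: L_def)
  have hk: "2 * P * L \<le> real k" using k(1) unfolding L_def P2(1) .
  have "32 \<le> s"
  proof (rule ccontr)
    assume "\<not> 32 \<le> s"
    moreover have "16 * 1 \<le> P * L" using P16 L1 by (intro mult_mono) auto
    ultimately show False using hk k(2) by linarith
  qed
  then have L5: "5 \<le> L" unfolding L_def by (rule log2_ge_5)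
  have PL: "0 < P * L" using P16 L5 by simp
  have kpos: "0 < real k" using hk PL by linarith
  define r0 where "r0 = nat \<lceil>real k / (2 * P * L)\<rceil>"
  have "1 \<le> real k / (2 * P * L)" using hk PL by (simp add: le_divide_eq mult.assoc)
  then have r0: "real k / (2 * P * L) \<le> real r0" "real r0 \<le> real k / (2 * P * L) + 1" "1 \<le> r0"
    unfolding r0_def by linarith+
  define r where "r = r0 + a - 1"
  have r: "a \<le> r" "r - a + 1 = r0" "real r \<le> real k / (2 * P * L) + real a"
    using r0 by (auto simp: r_def of_nat_diff)
  define \<rho> where "\<rho> = nat \<lfloor>L\<rfloor> + 1"
  have \<rho>: "real s < 2 ^ \<rho>" "real (4 * \<rho> + 1) \<le> 4 * L + 5"
    using less_power_floor_log2[of s] s L1 unfolding \<rho>_def L_def by auto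
  have "real s < real (2 ^ \<rho>)" using \<rho>(1) by simp
  then have s\<rho>: "s < 2 ^ \<rho>" by (rule of_nat_less_imp_less)
  define d where "d = real k / (P * L)"
  define q where "q = nat \<lceil>real r + d\<rceil>"
  have "0 \<le> d" using kpos PL by (simp add: d_def)
  then have q: "real r + d \<le> real q" "real q \<le> real r + d + 1" unfolding q_def by linarith+
  have "real (384 * a) \<le> real (44 * 2 ^ (t + 1))"
    unfolding a_def using linear_le_power2[OF t] by (simp only: of_nat_le_iff)
  then have "384 * real a \<le> 44 * P" by (simp add: P_def)
  then have "real r + real q * real (4 * \<rho> + 1) \<le> real k"
    using parameter_budget[OF P16 L5 hk r(3) q(2) d_def \<rho>(2)] by simp
  then have budget: "r + q * (4 * \<rho> + 1) \<le> k"
    by (simp only: of_nat_le_iff flip: of_nat_mult of_nat_add)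
  have "2 \<le> 4 * P * L / real k * real r0"
    using r0(1) hk PL kpos by (simp add: field_simps)
  then have "2 \<le> 2 ^ (t + 3) * real s * L / real k * (real r0 / real s)"
    using s by (simp add: P2 field_simps)
  then show ?thesis using r s\<rho> q(1) budget unfolding L_def d_def P_def a_def by blast
qed

lemma power_product_bound:
  fixes m g s x y :: real and a :: nat
  assumes "3 * s * x ^ a \<le> m" "m * y ^ a \<le> g" "2 \<le> x * y" "0 \<le> y" "0 \<le> s" "1 \<le> a"
  shows "6 * s \<le> g"
proof -
  have "(2::real) \<le> 2 ^ a" using assms(6) by (simp add: self_le_power)
  also have "\<dots> \<le> (x * y) ^ a" using assms(3) by (rule power_mono) simp
  finally have "2 \<le> x ^ a * y ^ a" by (simp add: power_mult_distrib)
  then have "3 * s * 2 \<le> 3 * s * (x ^ a * y ^ a)" using assms(5) by (intro mult_left_mono) auto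
  also have "\<dots> = (3 * s * x ^ a) * y ^ a" by (simp add: mult.assoc)
  also have "\<dots> \<le> m * y ^ a" using assms(1,4) by (intro mult_right_mono) auto
  finally show ?thesis using assms(2) by linarith
qed

theorem theorem1p2:
  fixes t s k :: nat and V :: "'a set" and E :: "'a set multiset"
  assumes "t \<ge> 3"
    and "t_hypergraph t V E"
    and "card V = s" and "s \<ge> 2"
    and "2 ^ (t + 2) * log 2 (real s) \<le> real k" and "k \<le> s"
    and "real (size E) \<ge> 3 * real s * ((2 ^ (t + 3) * real s * log 2 (real s)) / real k) ^ (t - 2)"
  shows "\<exists>S \<subseteq> V. card S \<le> k \<and>
           real (spanned E S) \<ge> real (card S) + real k / (2 ^ (t + 1) * log 2 (real s))"
proof -
  let ?traces = "\<lambda>R. size (filter_mset (\<lambda>e. card (e - R) \<le> 2) E)"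
  obtain r q \<rho> where r: "t - 2 \<le> r" and \<rho>: "s < 2 ^ \<rho>"
    and ratio: "2 \<le> 2 ^ (t + 3) * real s * log 2 (real s) / real k
      * (real (r - (t - 2) + 1) / real s)"
    and q: "real r + real k / (2 ^ (t + 1) * log 2 (real s)) \<le> real q"
    and budget: "r + q * (4 * \<rho> + 1) \<le> k"
    using parameters_exist[OF assms(1,4,5,6)] by blast
  have fin: "finite V" and edges: "\<forall>e\<in>#E. e \<subseteq> V \<and> card e \<le> (t - 2) + 2"
    using assms(1,2) unfolding t_hypergraph_def by auto
  have "r \<le> card V" "V \<noteq> {}" using budget assms(3,4,6) by auto
  from exists_subset_many_small_traces[OF fin edges r this] obtain R where R: "R \<subseteq> V" "card R = r"
    and "real (size E) * (real (r - (t - 2) + 1) / real (card V)) ^ (t - 2) \<le> real (?traces R)"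
    by blast
  then have "6 * real s \<le> real (?traces R)"
    using power_product_bound[OF assms(7) _ ratio] assms(1,3) by simp
  moreover have "2 * card V + q * (4 * \<rho> + 2) + 1 \<le> 6 * s"
    using budget assms(3,4,6) mult_le_mono2[of 1 "4 * \<rho> + 1" q] by (simp add: algebra_simps)
  ultimately have many: "2 * card V + q * (4 * \<rho> + 2) + 1 \<le> ?traces R" by linarith
  have "card V < 2 ^ \<rho>" using \<rho> assms(3) by simp
  from exists_superset_with_excess[OF assms(2) R(1) this many] obtain S
    where S: "S \<subseteq> V" "card S \<le> r + q * (4 * \<rho> + 1)" "card S + q \<le> spanned E S + r"
    unfolding R(2) by blast
  have "card S \<le> k" using S(2) budget by linarith
  moreover have "real (card S) + real q \<le> real (spanned E S) + real r" using S(3) by linarith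
  ultimately show ?thesis using S(1) q by (intro exI[of _ S]) auto
qed

end
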